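(* Let $b\ge3$, $D\subset\{0,\dots,b-1\}$ with $0\in D$ and $2\le|D|<b$, and list $\mathcal C=\mathcal C_{b,D}$ increasingly as $k_1<k_2<\cdots$. Then for every $q\in\mathbb N$, $$\lim_{N\to\infty}\frac1N\#\{n\le N: k_n\equiv 0\pmod q\}$$ exists and is strictly positive.
   Context: $\mathcal C_{b,D}=\{\sum_{j=0}^{k} d_j b^j : k\in\mathbb N_0,\ d_j\in D\}$. *)

theory Defs
  imports "HOL-Analysis.Analysis" "HOL-Library.Infinite_Set"
begin

definition digitset :: "nat \<Rightarrow> nat set \<Rightarrow> nat set" where
  "digitset b D = {(\<Sum>j\<le>k. d j * b ^ j) | k d. \<forall>j\<le>k. d j \<in> D}"

definition kseq :: "nat \<Rightarrow> nat set \<Rightarrow> nat \<Rightarrow> nat" where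
  "kseq b D n = enumerate (digitset b D) (n - 1)"

end

theory Submission
  imports Defs
begin

(*
  Let d_0 < ... < d_(m-1) enumerate D. Writing n in base m, replacing each digit a by d_a and
  reading the result in base b is an increasing map f onto C_(b,D), so k_n = f (n - 1); moreover
  f (y m^L + x) = b^L f y + f x for x < m^L. Choose e >= 1 with b^e idempotent modulo q and set
  T = m^e, B = b^e: then f (y T^K + x) = B f y + f x (mod q) for every K >= 1.

  Hence the proportion freq K s of the x < T^K with s + f x = 0 (mod q) obeys a Markov
  recursion: freq (K + k) s is the average of freq K (s + B f c) over the leading blocks c < T^k,
  and the shifts B f c mod q form a finite additive group H (steps below). A fixed number k of
  leading digits already reaches every element of H, so max - min of freq K over H contracts by
  the factor 1 - |H| / T^k every k levels (Doeblin). Thus freq K converges uniformly on H; the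
  limit is positive because the sum of freq K over H does not depend on K and is at least 1/T.
  Counting the n < N with q dividing f n block by block shows that this limit is the density.
*)

section \<open>Densities from block counts\<close>

lemma card_lessThan_mult_split:
  fixes a n :: nat
  shows "card {x. x < a * n \<and> P x} = (\<Sum>c<a. card {x. x < n \<and> P (c * n + x)})"
proof -
  have card_eq: "card {x. x < m \<and> Q x} = (\<Sum>x<m. of_bool (Q x) :: nat)" for m :: nat and Q
    by (simp add: Int_def conj_commute)
  have "(\<Sum>x<a * n. of_bool (P x) :: nat) = (\<Sum>c<a. \<Sum>x\<in>{c * n..<c * n + n}. of_bool (P x))"
    by (rule sum.nat_group[symmetric])
  also have "\<dots> = (\<Sum>c<a. \<Sum>x<n. of_bool (P (c * n + x)))"
  proof (rule sum.cong[OF refl])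
    fix c
    show "(\<Sum>x\<in>{c * n..<c * n + n}. of_bool (P x)) = (\<Sum>x<n. of_bool (P (c * n + x)) :: nat)"
      using sum.shift_bounds_nat_ivl[of "\<lambda>x. of_bool (P x) :: nat" 0 "c * n" n]
      by (simp add: add.commute lessThan_atLeast0)
  qed
  finally show ?thesis
    unfolding card_eq .
qed

lemma card_Int_lessThan_mono:
  fixes S :: "nat set"
  assumes "M \<le> N"
  shows "card (S \<inter> {..<M}) \<le> card (S \<inter> {..<N})"
    and "card (S \<inter> {..<N}) \<le> card (S \<inter> {..<M}) + (N - M)"
proof -
  show "card (S \<inter> {..<M}) \<le> card (S \<inter> {..<N})"
    using assms by (intro card_mono) auto
  have "card (S \<inter> {..<N}) \<le> card ((S \<inter> {..<M}) \<union> {M..<N})"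
    by (intro card_mono) auto
  then show "card (S \<inter> {..<N}) \<le> card (S \<inter> {..<M}) + (N - M)"
    using card_Un_le[of "S \<inter> {..<M}" "{M..<N}"] by simp
qed

lemma density_from_blocks:
  fixes S :: "nat set" and L :: real
  assumes blocks: "\<And>e. e > 0 \<Longrightarrow> \<exists>P>0. \<forall>Q.
      \<bar>real (card (S \<inter> {..<Q * P})) - real (Q * P) * L\<bar> \<le> real (Q * P) * e"
  shows "(\<lambda>N. real (card (S \<inter> {..<N})) / real N) \<longlonglongrightarrow> L"
proof (rule LIMSEQ_I)
  let ?A = "\<lambda>N. real (card (S \<inter> {..<N}))"
  fix r :: real
  assume "r > 0"
  then obtain P where "P > 0"
    and P: "\<And>Q. \<bar>?A (Q * P) - real (Q * P) * L\<bar> \<le> real (Q * P) * (r / 2)"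
    using blocks[of "r / 2"] by auto
  define N0 where "N0 = nat \<lceil>2 * real P * (1 + \<bar>L\<bar>) / r\<rceil> + 1"
  show "\<exists>N0. \<forall>N\<ge>N0. norm (?A N / real N - L) < r"
  proof (intro exI allI impI)
    fix N
    assume "N \<ge> N0"
    then have "N > 0" and "2 * real P * (1 + \<bar>L\<bar>) / r < real N"
      unfolding N0_def by linarith+
    then have N_large: "2 * real P * (1 + \<bar>L\<bar>) < real N * r"
      using \<open>r > 0\<close> by (simp add: field_simps)
    define M where "M = N div P * P"
    have "M \<le> N" and "N - M < P"
      using \<open>P > 0\<close> by (simp_all add: M_def minus_div_mult_eq_mod)
    have "?A M \<le> ?A N" and "?A N \<le> ?A M + real (N - M)"
      using card_Int_lessThan_mono[OF \<open>M \<le> N\<close>, of S] by (simp_all flip: of_nat_add)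
    moreover have "\<bar>real M * L - real N * L\<bar> \<le> real P * \<bar>L\<bar>"
      using \<open>M \<le> N\<close> \<open>N - M < P\<close>
      by (simp add: abs_mult flip: left_diff_distrib of_nat_diff) (simp add: mult_right_mono)
    moreover have "\<bar>?A M - real M * L\<bar> \<le> real N * (r / 2)"
      using P[of "N div P"] \<open>M \<le> N\<close> \<open>r > 0\<close> unfolding M_def
      by (meson order.trans mult_right_mono of_nat_le_iff less_imp_le half_gt_zero)
    moreover have "real (N - M) < real P"
      using \<open>N - M < P\<close> by simp
    moreover have "real P * (1 + \<bar>L\<bar>) = real P + real P * \<bar>L\<bar>"
      by (simp add: algebra_simps)
    ultimately have "\<bar>?A N - real N * L\<bar> < real N * r"
      using N_large by linarith
    moreover have "?A N / real N - L = (?A N - real N * L) / real N"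
      using \<open>N > 0\<close> by (simp add: field_simps)
    ultimately show "norm (?A N / real N - L) < r"
      using \<open>N > 0\<close> by (simp add: abs_divide pos_divide_less_eq mult.commute)
  qed
qed

section \<open>Recoding digits\<close>

lemma sum_digits_Suc:
  fixes c :: "nat \<Rightarrow> nat"
  shows "(\<Sum>j\<le>Suc k. c j * b ^ j) = c 0 + b * (\<Sum>j\<le>k. c (Suc j) * b ^ j)"
  unfolding sum.atMost_Suc_shift by (simp add: sum_distrib_left ac_simps)

lemma digitset_mult_add:
  assumes "x \<in> digitset b D" and "a \<in> D"
  shows "b * x + a \<in> digitset b D"
proof -
  obtain k c where x: "x = (\<Sum>j\<le>k. c j * b ^ j)" and c: "\<forall>j\<le>k. c j \<in> D"
    using assms(1) unfolding digitset_def by blast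
  have "b * x + a = (\<Sum>j\<le>Suc k. case_nat a c j * b ^ j)"
    unfolding sum_digits_Suc x by simp
  moreover have "\<forall>j\<le>Suc k. case_nat a c j \<in> D"
    using c assms(2) by (auto split: nat.split)
  ultimately show ?thesis
    unfolding digitset_def by blast
qed

lemma digit_in_digitset: "a \<in> D \<Longrightarrow> a \<in> digitset b D"
  unfolding digitset_def by (auto intro!: exI[of _ 0] exI[of _ "\<lambda>_. a"])

(* The guard m < 2 only makes the recursion terminate; all lemmas assume m \<ge> 2 and d 0 = 0. *)
function recode_digits :: "nat \<Rightarrow> (nat \<Rightarrow> nat) \<Rightarrow> nat \<Rightarrow> nat \<Rightarrow> nat" where
  "recode_digits m d b n =
    (if n = 0 \<or> m < 2 then 0 else d (n mod m) + b * recode_digits m d b (n div m))"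
  by auto
termination by (relation "Wellfounded.measure (\<lambda>(m, d, b, n). n)") auto

declare recode_digits.simps [simp del]

lemma recode_digits_0 [simp]: "recode_digits m d b 0 = 0"
  by (simp add: recode_digits.simps)

lemma recode_digits_div_mod:
  assumes "m \<ge> 2" "d 0 = 0"
  shows "recode_digits m d b n = b * recode_digits m d b (n div m) + d (n mod m)"
  using assms by (subst recode_digits.simps) auto

lemma recode_digits_mult_add:
  assumes "m \<ge> 2" "d 0 = 0" "a < m"
  shows "recode_digits m d b (m * n + a) = b * recode_digits m d b n + d a"
  using recode_digits_div_mod[of m d b "m * n + a"] assms by simp

lemma recode_digits_concat:
  assumes "m \<ge> 2" "d 0 = 0" "x < m ^ L"
  shows "recode_digits m d b (y * m ^ L + x)
    = b ^ L * recode_digits m d b y + recode_digits m d b x"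
  using assms(3)
proof (induction L arbitrary: x)
  case (Suc L)
  have "x div m < m ^ L"
    using Suc.prems assms(1) by (simp add: div_less_iff_less_mult mult.commute)
  have "y * m ^ Suc L + x = m * (y * m ^ L + x div m) + x mod m"
    by (simp add: algebra_simps)
  then have "recode_digits m d b (y * m ^ Suc L + x)
      = b * recode_digits m d b (y * m ^ L + x div m) + d (x mod m)"
    using assms(1,2) by (simp add: recode_digits_mult_add)
  also have "\<dots> = b ^ Suc L * recode_digits m d b y
      + (b * recode_digits m d b (x div m) + d (x mod m))"
    using Suc.IH[OF \<open>x div m < m ^ L\<close>] by (simp add: algebra_simps)
  also have "b * recode_digits m d b (x div m) + d (x mod m) = recode_digits m d b x"
    using recode_digits_div_mod[of m d b x] assms(1,2) by simp
  finally show ?case .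
qed simp

lemma recode_digits_less_Suc:
  assumes "m \<ge> 2" "d 0 = 0" "strict_mono_on {..<m} d" "d ` {..<m} \<subseteq> {..<b}"
  shows "recode_digits m d b n < recode_digits m d b (Suc n)"
proof (induction n rule: less_induct)
  case (less n)
  let ?r = "recode_digits m d b"
  have r_n: "?r n = b * ?r (n div m) + d (n mod m)"
    using recode_digits_div_mod[of m d b n] assms(1,2) by simp
  have Suc_n: "Suc n = m * (n div m) + Suc (n mod m)"
    by (simp add: mult_div_mod_eq)
  have "n mod m < m"
    using assms(1) by simp
  show ?case
  proof (cases "Suc (n mod m) < m")
    case True
    have "?r (Suc n) = b * ?r (n div m) + d (Suc (n mod m))"
      unfolding Suc_n using assms(1,2) True by (rule recode_digits_mult_add)
    moreover have "d (n mod m) < d (Suc (n mod m))"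
      using True assms(3) by (simp add: strict_mono_on_def)
    ultimately show ?thesis
      using r_n by simp
  next
    case False
    then have last_digit: "Suc (n mod m) = m"
      using \<open>n mod m < m\<close> by simp
    then have "Suc n = m * Suc (n div m) + 0"
      using Suc_n by simp
    then have "?r (Suc n) = b * ?r (Suc (n div m))"
      using recode_digits_mult_add[of m d 0 b "Suc (n div m)"] assms(1,2) by simp
    moreover have "n div m < n"
      using last_digit assms(1) by (cases "n = 0") simp_all
    then have "b * (?r (n div m) + 1) \<le> b * ?r (Suc (n div m))"
      using less.IH by (intro mult_le_mono2) (simp add: Suc_le_eq)
    moreover have "d (n mod m) < b"
      using assms(4) \<open>n mod m < m\<close> by auto
    ultimately show ?thesis
      using r_n by (simp add: algebra_simps)
  qed
qed

lemma strict_mono_recode_digits: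
  assumes "m \<ge> 2" "d 0 = 0" "strict_mono_on {..<m} d" "d ` {..<m} \<subseteq> {..<b}"
  shows "strict_mono (recode_digits m d b)"
  using recode_digits_less_Suc[OF assms] by (simp add: strict_mono_Suc_iff)

lemma recode_digits_in_digitset:
  assumes "m \<ge> 2" "d 0 = 0" "d ` {..<m} = D"
  shows "recode_digits m d b n \<in> digitset b D"
proof (induction n rule: less_induct)
  case (less n)
  show ?case
  proof (cases "n = 0")
    case True
    then show ?thesis
      using assms by (auto intro: digit_in_digitset)
  next
    case False
    then have "recode_digits m d b (n div m) \<in> digitset b D"
      using assms(1) by (intro less.IH) simp
    moreover have "d (n mod m) \<in> D"
      using assms by auto
    ultimately show ?thesis
      using recode_digits_div_mod[of m d b n] assms(1,2) by (simp add: digitset_mult_add)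
  qed
qed

lemma digit_sum_in_range_recode_digits:
  assumes "m \<ge> 2" "d 0 = 0" "d ` {..<m} = D" "\<forall>j\<le>k. c j \<in> D"
  shows "(\<Sum>j\<le>k. c j * b ^ j) \<in> range (recode_digits m d b)"
  using assms(4)
proof (induction k arbitrary: c)
  case 0
  then obtain a where "a < m" "c 0 = d a"
    using assms(3) by auto
  then have "(\<Sum>j\<le>0. c j * b ^ j) = recode_digits m d b a"
    using recode_digits_mult_add[of m d a b 0] assms(1,2) by simp
  then show ?case
    by (rule range_eqI)
next
  case (Suc k)
  have "(\<Sum>j\<le>k. c (Suc j) * b ^ j) \<in> range (recode_digits m d b)"
    using Suc.prems by (intro Suc.IH) simp
  then obtain n where n: "(\<Sum>j\<le>k. c (Suc j) * b ^ j) = recode_digits m d b n"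
    by blast
  obtain a where "a < m" "c 0 = d a"
    using Suc.prems assms(3) by force
  then have "(\<Sum>j\<le>Suc k. c j * b ^ j) = recode_digits m d b (m * n + a)"
    unfolding sum_digits_Suc n using assms(1,2) by (simp add: recode_digits_mult_add)
  then show ?case
    by (rule range_eqI)
qed

lemma range_recode_digits:
  assumes "m \<ge> 2" "d 0 = 0" "d ` {..<m} = D"
  shows "range (recode_digits m d b) = digitset b D"
  using recode_digits_in_digitset[OF assms] digit_sum_in_range_recode_digits[OF assms]
  unfolding digitset_def by blast

section \<open>Residues of block-additive functions\<close>

locale block_additive =
  fixes T B q :: nat and f :: "nat \<Rightarrow> nat"
  assumes T_ge_2: "T \<ge> 2"
    and q_pos: "q > 0"
    and f_0: "f 0 = 0"
    and f_concat: "\<And>x y K. x < T ^ K \<Longrightarrow> f (y * T ^ K + x) = B ^ K * f y + f x"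
    and B_idem: "B * B mod q = B mod q"
begin

lemma power_B_mult_mod: "K \<ge> 1 \<Longrightarrow> B ^ K * y mod q = B * y mod q"
proof (induction K rule: dec_induct)
  case (step K)
  have "B ^ Suc K * y mod q = B * (B ^ K * y mod q) mod q"
    by (simp add: mod_mult_right_eq mult.assoc)
  also have "\<dots> = B * (B * y mod q) mod q"
    using step.IH by simp
  also have "\<dots> = (B * B mod q) * y mod q"
    by (simp add: mod_mult_right_eq mod_mult_left_eq mult.assoc)
  also have "\<dots> = B * y mod q"
    using B_idem by (simp add: mod_mult_left_eq)
  finally show ?case .
qed simp

lemma less_power_T: "n < T ^ n"
  using T_ge_2 less_exp[of n] power_mono[of 2 T n] by linarith

lemma f_block_mod:
  assumes "K \<ge> 1" "x < T ^ K"
  shows "(s + f (c * T ^ K + x)) mod q = ((s + B * f c) mod q + f x) mod q"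
proof -
  have "(s + f (c * T ^ K + x)) mod q = ((s + B ^ K * f c mod q) mod q + f x) mod q"
    unfolding f_concat[OF assms(2)] by (simp add: mod_add_left_eq mod_add_right_eq add.assoc)
  then show ?thesis
    unfolding power_B_mult_mod[OF assms(1)] by (simp add: mod_add_right_eq)
qed

definition freq :: "nat \<Rightarrow> nat \<Rightarrow> real" where
  "freq K s = real (card {x. x < T ^ K \<and> (s + f x) mod q = 0}) / real (T ^ K)"

definition steps :: "nat set" where
  "steps = range (\<lambda>c. B * f c mod q)"

lemma freq_nonneg: "0 \<le> freq K s"
  unfolding freq_def by simp

lemma freq_le_1: "freq K s \<le> 1"
proof -
  have "card {x. x < T ^ K \<and> (s + f x) mod q = 0} \<le> card {..<T ^ K}"
    by (rule card_mono) auto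
  then show ?thesis
    unfolding freq_def using T_ge_2 by (simp add: divide_le_eq_1)
qed

lemma card_zeros_blocks:
  assumes "K \<ge> 1"
  shows "real (card {x. x < Q * T ^ K \<and> (s + f x) mod q = 0})
    = real (T ^ K) * (\<Sum>c<Q. freq K ((s + B * f c) mod q))"
proof -
  have "card {x. x < Q * T ^ K \<and> (s + f x) mod q = 0}
      = (\<Sum>c<Q. card {x. x < T ^ K \<and> ((s + B * f c) mod q + f x) mod q = 0})"
    unfolding card_lessThan_mult_split using f_block_mod[OF assms]
    by (intro sum.cong refl arg_cong[where f = card] Collect_cong conj_cong) simp_all
  then show ?thesis
    unfolding freq_def using T_ge_2 by (simp add: sum_distrib_left)
qed

lemma freq_add:
  assumes "K \<ge> 1"
  shows "freq (K + k) s = (\<Sum>c<T ^ k. freq K ((s + B * f c) mod q)) / real (T ^ k)"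
  using card_zeros_blocks[OF assms, of "T ^ k" s] T_ge_2
  by (simp add: freq_def power_add mult.commute)

lemma steps_subset: "steps \<subseteq> {..<q}"
  using q_pos by (auto simp: steps_def)

lemma finite_steps: "finite steps"
  using steps_subset finite_subset by blast

lemma step_in_steps: "B * f c mod q \<in> steps"
  by (simp add: steps_def)

lemma zero_in_steps: "0 \<in> steps"
  using step_in_steps[of 0] by (simp add: f_0)

lemma add_mod_steps:
  assumes "v \<in> steps" "w \<in> steps"
  shows "(v + w) mod q \<in> steps"
proof -
  obtain c d where v: "v = B * f c mod q" and w: "w = B * f d mod q"
    using assms by (auto simp: steps_def)
  have "d < T ^ Suc d"
    using less_power_T[of "Suc d"] by simp
  then have "f (c * T ^ Suc d + d) = B ^ Suc d * f c + f d"
    by (rule f_concat)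
  then have "B * f (c * T ^ Suc d + d) = B ^ Suc (Suc d) * f c + B * f d"
    by (simp add: algebra_simps)
  then have "B * f (c * T ^ Suc d + d) mod q = (v + w) mod q"
    unfolding v w using power_B_mult_mod[of "Suc (Suc d)" "f c"]
    by (metis mod_add_eq mod_add_left_eq le_add1 plus_1_eq_Suc)
  then show ?thesis
    by (metis step_in_steps)
qed

lemma shift_mod_steps: "s \<in> steps \<Longrightarrow> (s + B * f c) mod q \<in> steps"
  using add_mod_steps[OF _ step_in_steps] by (simp add: mod_add_right_eq)

lemma sum_steps_shift:
  assumes "s \<in> steps"
  shows "(\<Sum>v\<in>steps. h ((s + v) mod q)) = (\<Sum>v\<in>steps. h v)"
proof -
  have "inj_on (\<lambda>v. (s + v) mod q) steps"
  proof (rule inj_onI)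
    fix v w
    assume "v \<in> steps" "w \<in> steps" "(s + v) mod q = (s + w) mod q"
    then have "v mod q = w mod q"
      by (simp add: nat_mod_eq_iff)
    then show "v = w"
      using steps_subset \<open>v \<in> steps\<close> \<open>w \<in> steps\<close> by (metis lessThan_iff mod_less subsetD)
  qed
  moreover have "(\<lambda>v. (s + v) mod q) ` steps \<subseteq> steps"
    using add_mod_steps[OF assms] by auto
  ultimately have "bij_betw (\<lambda>v. (s + v) mod q) steps steps"
    using endo_inj_surj[OF finite_steps] by (simp add: bij_betw_def)
  then show ?thesis
    by (rule sum.reindex_bij_betw)
qed

definition max_freq :: "nat \<Rightarrow> real" where
  "max_freq K = Max (freq K ` steps)"

definition min_freq :: "nat \<Rightarrow> real" where
  "min_freq K = Min (freq K ` steps)"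

definition total_freq :: "nat \<Rightarrow> real" where
  "total_freq K = (\<Sum>v\<in>steps. freq K v)"

lemma freq_le_max_freq: "v \<in> steps \<Longrightarrow> freq K v \<le> max_freq K"
  unfolding max_freq_def using finite_steps by simp

lemma min_freq_le_freq: "v \<in> steps \<Longrightarrow> min_freq K \<le> freq K v"
  unfolding min_freq_def using finite_steps by simp

lemma max_freq_attained: "\<exists>v\<in>steps. max_freq K = freq K v"
  unfolding max_freq_def using finite_steps zero_in_steps
  by (metis Max_in empty_iff finite_imageI image_iff image_is_empty)

lemma min_freq_attained: "\<exists>v\<in>steps. min_freq K = freq K v"
  unfolding min_freq_def using finite_steps zero_in_steps
  by (metis Min_in empty_iff finite_imageI image_iff image_is_empty)

lemma min_freq_le_max_freq: "min_freq K \<le> max_freq K"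
  using min_freq_le_freq[OF zero_in_steps] freq_le_max_freq[OF zero_in_steps] by (rule order.trans)

lemma max_freq_le_1: "max_freq K \<le> 1"
  using max_freq_attained freq_le_1 by metis

lemma min_freq_nonneg: "0 \<le> min_freq K"
  using min_freq_attained freq_nonneg by metis

lemma freq_add_between:
  assumes "K \<ge> 1" "s \<in> steps"
  shows "min_freq K \<le> freq (K + k) s" and "freq (K + k) s \<le> max_freq K"
proof -
  have "real (T ^ k) > 0"
    using T_ge_2 by simp
  moreover have "(\<Sum>c<T ^ k. freq K ((s + B * f c) mod q)) \<le> real (card {..<T ^ k}) * max_freq K"
    using shift_mod_steps[OF assms(2)] freq_le_max_freq by (intro sum_bounded_above) auto
  moreover have "real (card {..<T ^ k}) * min_freq K \<le> (\<Sum>c<T ^ k. freq K ((s + B * f c) mod q))"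
    using shift_mod_steps[OF assms(2)] min_freq_le_freq by (intro sum_bounded_below) auto
  ultimately show "min_freq K \<le> freq (K + k) s" and "freq (K + k) s \<le> max_freq K"
    unfolding freq_add[OF assms(1)] by (simp_all add: field_simps)
qed

lemma max_freq_antimono: "1 \<le> K \<Longrightarrow> K \<le> K' \<Longrightarrow> max_freq K' \<le> max_freq K"
  using max_freq_attained[of K'] freq_add_between(2)[of K _ "K' - K"] by force

lemma min_freq_mono: "1 \<le> K \<Longrightarrow> K \<le> K' \<Longrightarrow> min_freq K \<le> min_freq K'"
  using min_freq_attained[of K'] freq_add_between(1)[of K _ "K' - K"] by force

lemma total_freq_add:
  assumes "K \<ge> 1"
  shows "total_freq (K + k) = total_freq K"
proof -
  have "total_freq (K + k)
      = (\<Sum>c<T ^ k. \<Sum>v\<in>steps. freq K ((v + B * f c) mod q)) / real (T ^ k)"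
    unfolding total_freq_def freq_add[OF assms]
    by (simp add: sum.swap[of _ steps] flip: sum_divide_distrib)
  also have "\<dots> = (\<Sum>c<T ^ k. total_freq K) / real (T ^ k)"
  proof -
    have "(\<Sum>v\<in>steps. freq K ((v + B * f c) mod q)) = total_freq K" for c
      using sum_steps_shift[OF step_in_steps, of "freq K" c] unfolding total_freq_def
      by (simp add: mod_add_right_eq add.commute)
    then show ?thesis
      by simp
  qed
  also have "\<dots> = total_freq K"
    using T_ge_2 by simp
  finally show ?thesis .
qed

lemma total_freq_ge:
  assumes "K \<ge> 1"
  shows "1 / real T \<le> total_freq K"
proof -
  have "0 \<in> {x. x < T ^ 1 \<and> (0 + f x) mod q = 0}"
    using T_ge_2 f_0 by simp
  then have "0 < card {x. x < T ^ 1 \<and> (0 + f x) mod q = 0}"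
    by (subst card_gt_0_iff) auto
  then have "1 / real T \<le> freq 1 0"
    unfolding freq_def using T_ge_2 by (simp add: divide_right_mono)
  also have "\<dots> \<le> total_freq 1"
    unfolding total_freq_def by (intro member_le_sum zero_in_steps finite_steps freq_nonneg)
  also have "\<dots> = total_freq K"
    using total_freq_add[of 1 "K - 1"] assms by simp
  finally show ?thesis .
qed

lemma ex_step_representatives:
  "\<exists>k R. R \<subseteq> {..<T ^ k} \<and> bij_betw (\<lambda>c. B * f c mod q) R steps"
proof -
  let ?g = "\<lambda>c. B * f c mod q"
  define R where "R = inv ?g ` steps"
  have "?g (inv ?g v) = v" if "v \<in> steps" for v
    using that unfolding steps_def by (rule f_inv_into_f)
  then have "bij_betw ?g R steps"
    unfolding R_def by (intro bij_betw_imageI inj_onI) (auto simp: image_iff)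
  moreover have "R \<subseteq> {..<T ^ Suc (Max R)}"
  proof
    fix c
    assume "c \<in> R"
    then have "c < Suc (Max R)"
      using finite_steps by (simp add: R_def le_imp_less_Suc)
    then show "c \<in> {..<T ^ Suc (Max R)}"
      using less_power_T[of "Suc (Max R)"] by simp
  qed
  ultimately show ?thesis
    by blast
qed

context
  fixes k :: nat and R :: "nat set"
  assumes R_bound: "R \<subseteq> {..<T ^ k}"
    and R_bij: "bij_betw (\<lambda>c. B * f c mod q) R steps"
begin
lemma card_steps_le: "card steps \<le> T ^ k"
proof -
  have "card R \<le> card {..<T ^ k}"
    by (rule card_mono[OF finite_lessThan R_bound])
  then show ?thesis
    using bij_betw_same_card[OF R_bij] by simp
qed

lemma freq_add_representatives:
  assumes "K \<ge> 1" "s \<in> steps"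
  shows "real (T ^ k) * freq (K + k) s
    = total_freq K + (\<Sum>c\<in>{..<T ^ k} - R. freq K ((s + B * f c) mod q))"
proof -
  have "(\<Sum>c\<in>R. freq K ((s + B * f c) mod q)) = (\<Sum>v\<in>steps. freq K ((s + v) mod q))"
    using sum.reindex_bij_betw[OF R_bij, of "\<lambda>v. freq K ((s + v) mod q)"]
    by (simp add: mod_add_right_eq)
  also have "\<dots> = total_freq K"
    unfolding total_freq_def by (rule sum_steps_shift[OF assms(2)])
  finally have on_R: "(\<Sum>c\<in>R. freq K ((s + B * f c) mod q)) = total_freq K" .
  have "real (T ^ k) * freq (K + k) s = (\<Sum>c<T ^ k. freq K ((s + B * f c) mod q))"
    unfolding freq_add[OF assms(1)] using T_ge_2 by simp
  also have "\<dots> = (\<Sum>c\<in>{..<T ^ k} - R. freq K ((s + B * f c) mod q))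
      + (\<Sum>c\<in>R. freq K ((s + B * f c) mod q))"
    by (rule sum.subset_diff[OF R_bound]) simp
  finally show ?thesis
    unfolding on_R by simp
qed

(* Doeblin: every residue in steps is hit by exactly one leading block in R, so freq (K + k) s
   contains total_freq K as a summand independent of s. *)
lemma osc_freq_contract:
  assumes "K \<ge> 1"
  shows "max_freq (K + k) - min_freq (K + k)
    \<le> (1 - real (card steps) / real (T ^ k)) * (max_freq K - min_freq K)"
proof -
  let ?rest = "{..<T ^ k} - R"
  have "card ?rest = T ^ k - card R"
    using card_Diff_subset[OF finite_subset[OF R_bound finite_lessThan] R_bound] by simp
  then have card_rest: "real (card ?rest) = real (T ^ k) - real (card steps)"
    using bij_betw_same_card[OF R_bij] card_steps_le by (simp add: of_nat_diff)
  obtain s1 where "s1 \<in> steps" and s1: "max_freq (K + k) = freq (K + k) s1"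
    using max_freq_attained by blast
  obtain s2 where "s2 \<in> steps" and s2: "min_freq (K + k) = freq (K + k) s2"
    using min_freq_attained by blast
  have "(\<Sum>c\<in>?rest. freq K ((s1 + B * f c) mod q)) \<le> real (card ?rest) * max_freq K"
    using shift_mod_steps[OF \<open>s1 \<in> steps\<close>] freq_le_max_freq by (intro sum_bounded_above) auto
  moreover have "real (card ?rest) * min_freq K \<le> (\<Sum>c\<in>?rest. freq K ((s2 + B * f c) mod q))"
    using shift_mod_steps[OF \<open>s2 \<in> steps\<close>] min_freq_le_freq by (intro sum_bounded_below) auto
  ultimately have "real (T ^ k) * (max_freq (K + k) - min_freq (K + k))
      \<le> real (card ?rest) * (max_freq K - min_freq K)"
    unfolding right_diff_distrib s1 s2 freq_add_representatives[OF assms \<open>s1 \<in> steps\<close>]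
      freq_add_representatives[OF assms \<open>s2 \<in> steps\<close>]
    by linarith
  then have "max_freq (K + k) - min_freq (K + k)
      \<le> real (card ?rest) / real (T ^ k) * (max_freq K - min_freq K)"
    using T_ge_2 by (simp add: field_simps)
  also have "real (card ?rest) / real (T ^ k) = 1 - real (card steps) / real (T ^ k)"
    unfolding card_rest using T_ge_2 by (simp add: field_simps)
  finally show ?thesis .
qed


lemma osc_freq_power:
  "max_freq (1 + n * k) - min_freq (1 + n * k) \<le> (1 - real (card steps) / real (T ^ k)) ^ n"
proof (induction n)
  case 0
  show ?case
    using max_freq_le_1[of 1] min_freq_nonneg[of 1] by simp
next
  case (Suc n)
  let ?\<rho> = "1 - real (card steps) / real (T ^ k)"
  have "1 + Suc n * k = (1 + n * k) + k"
    by simp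
  then have "max_freq (1 + Suc n * k) - min_freq (1 + Suc n * k)
      \<le> ?\<rho> * (max_freq (1 + n * k) - min_freq (1 + n * k))"
    using osc_freq_contract[of "1 + n * k"] by (simp only:)
  also have "\<dots> \<le> ?\<rho> * ?\<rho> ^ n"
    using Suc.IH card_steps_le T_ge_2 by (intro mult_left_mono) (simp_all add: field_simps)
  finally show ?case
    by simp
qed

end

lemma osc_freq_vanishes:
  assumes "e > 0"
  shows "\<exists>K\<ge>1. max_freq K - min_freq K < e"
proof -
  obtain k R where R: "R \<subseteq> {..<T ^ k}" "bij_betw (\<lambda>c. B * f c mod q) R steps"
    using ex_step_representatives by blast
  define \<rho> where "\<rho> = 1 - real (card steps) / real (T ^ k)"
  have "0 < card steps"
    using finite_steps zero_in_steps card_gt_0_iff by blast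
  then have "\<rho> < 1"
    using T_ge_2 by (simp add: \<rho>_def)
  then obtain n where "\<rho> ^ n < e"
    using real_arch_pow_inv[OF assms] by blast
  then show ?thesis
    using osc_freq_power[OF R, of n] by (intro exI[of _ "1 + n * k"]) (simp add: \<rho>_def)
qed

definition limit_freq :: real where
  "limit_freq = Inf (max_freq ` {1..})"

lemma limit_freq_le_max_freq: "K \<ge> 1 \<Longrightarrow> limit_freq \<le> max_freq K"
  unfolding limit_freq_def
  using order.trans[OF min_freq_nonneg min_freq_le_max_freq] by (intro cInf_lower bdd_belowI[of _ 0]) auto

lemma min_freq_le_limit_freq:
  assumes "K \<ge> 1"
  shows "min_freq K \<le> limit_freq"
  unfolding limit_freq_def
proof (rule cInf_greatest)
  fix x
  assume "x \<in> max_freq ` {1..}"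
  then obtain K' where "K' \<ge> 1" and x: "x = max_freq K'"
    by auto
  have "min_freq K \<le> min_freq (max K K')"
    using assms by (intro min_freq_mono) auto
  also have "\<dots> \<le> max_freq (max K K')"
    by (rule min_freq_le_max_freq)
  also have "\<dots> \<le> max_freq K'"
    using \<open>K' \<ge> 1\<close> by (intro max_freq_antimono) auto
  finally show "min_freq K \<le> x"
    unfolding x .
qed simp

lemma limit_freq_pos: "limit_freq > 0"
proof -
  have "0 < card steps"
    using finite_steps zero_in_steps card_gt_0_iff by blast
  have "1 / (real T * real (card steps)) \<le> limit_freq"
    unfolding limit_freq_def
  proof (rule cInf_greatest)
    fix x
    assume "x \<in> max_freq ` {1..}"
    then obtain K where "K \<ge> 1" and x: "x = max_freq K"
      by auto
    have "total_freq K \<le> real (card steps) * max_freq K"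
      unfolding total_freq_def using freq_le_max_freq by (intro sum_bounded_above) auto
    then have "1 / real T \<le> real (card steps) * x"
      unfolding x using total_freq_ge[OF \<open>K \<ge> 1\<close>] by linarith
    then show "1 / (real T * real (card steps)) \<le> x"
      using \<open>0 < card steps\<close> T_ge_2 by (simp add: field_simps)
  qed simp
  moreover have "0 < 1 / (real T * real (card steps))"
    using \<open>0 < card steps\<close> T_ge_2 by simp
  ultimately show ?thesis
    by linarith
qed

lemma freq_near_limit_freq:
  assumes "e > 0"
  shows "\<exists>K\<ge>1. \<forall>v\<in>steps. \<bar>freq K v - limit_freq\<bar> < e"
proof -
  obtain K where "K \<ge> 1" and osc: "max_freq K - min_freq K < e"
    using osc_freq_vanishes[OF assms] by blast
  have "\<bar>freq K v - limit_freq\<bar> < e" if "v \<in> steps" for v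
    using freq_le_max_freq[OF that, of K] min_freq_le_freq[OF that, of K] osc
      limit_freq_le_max_freq[OF \<open>K \<ge> 1\<close>] min_freq_le_limit_freq[OF \<open>K \<ge> 1\<close>] by linarith
  then show ?thesis
    using \<open>K \<ge> 1\<close> by blast
qed

theorem tendsto_density_zeros:
  "(\<lambda>N. real (card ({n. q dvd f n} \<inter> {..<N})) / real N) \<longlonglongrightarrow> limit_freq"
proof (rule density_from_blocks)
  fix e :: real
  assume "e > 0"
  then obtain K where "K \<ge> 1" and K: "\<And>v. v \<in> steps \<Longrightarrow> \<bar>freq K v - limit_freq\<bar> < e"
    using freq_near_limit_freq by blast
  have "\<bar>real (card ({n. q dvd f n} \<inter> {..<Q * T ^ K})) - real (Q * T ^ K) * limit_freq\<bar>
      \<le> real (Q * T ^ K) * e" for Q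
  proof -
    have "{n. q dvd f n} \<inter> {..<Q * T ^ K} = {x. x < Q * T ^ K \<and> (0 + f x) mod q = 0}"
      by auto
    then have "\<bar>real (card ({n. q dvd f n} \<inter> {..<Q * T ^ K})) - real (Q * T ^ K) * limit_freq\<bar>
        = \<bar>\<Sum>c<Q. real (T ^ K) * (freq K (B * f c mod q) - limit_freq)\<bar>"
      using card_zeros_blocks[OF \<open>K \<ge> 1\<close>, of Q 0]
      by (simp add: algebra_simps sum_subtractf sum_distrib_left)
    also have "\<dots> \<le> (\<Sum>c<Q. real (T ^ K) * e)"
    proof (rule order.trans[OF sum_abs], rule sum_mono)
      fix c
      show "\<bar>real (T ^ K) * (freq K (B * f c mod q) - limit_freq)\<bar> \<le> real (T ^ K) * e"
        unfolding abs_mult abs_of_nat using K[OF step_in_steps, of c] by (intro mult_left_mono) auto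
    qed
    finally show ?thesis
      by simp
  qed
  then show "\<exists>P>0. \<forall>Q. \<bar>real (card ({n. q dvd f n} \<inter> {..<Q * P})) - real (Q * P) * limit_freq\<bar>
      \<le> real (Q * P) * e"
    using T_ge_2 by (intro exI[of _ "T ^ K"]) auto
qed

end

section \<open>The digit set C_(b,D)\<close>

lemma enumerate_range_strict_mono:
  fixes h :: "nat \<Rightarrow> nat"
  assumes "strict_mono h"
  shows "enumerate (range h) n = h n"
  using assms
proof (induction n arbitrary: h)
  case 0
  then show ?case
    by (auto simp: enumerate_0 strict_mono_less_eq intro!: Least_equality)
next
  case (Suc n)
  have "enumerate (range h) 0 = h 0"
    using Suc.prems by (auto simp: enumerate_0 strict_mono_less_eq intro!: Least_equality)
  moreover have "range h - {h 0} = range (h \<circ> Suc)"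
  proof
    show "range h - {h 0} \<subseteq> range (h \<circ> Suc)"
      by (auto simp: image_iff) (metis not0_implies_Suc)
    show "range (h \<circ> Suc) \<subseteq> range h - {h 0}"
      using Suc.prems by (auto simp: strict_mono_eq)
  qed
  moreover have "enumerate (range (h \<circ> Suc)) n = (h \<circ> Suc) n"
    using Suc.prems by (intro Suc.IH) (simp add: strict_mono_def)
  ultimately show ?case
    by (simp add: enumerate_Suc')
qed

lemma ex_power_mod_idempotent:
  fixes b q :: nat
  assumes "q > 0"
  shows "\<exists>e\<ge>1. (b ^ e * b ^ e) mod q = b ^ e mod q"
proof -
  have "\<not> inj_on (\<lambda>j. b ^ j mod q) {..q}"
  proof
    assume "inj_on (\<lambda>j. b ^ j mod q) {..q}"
    then have "card {..q} \<le> card {..<q}"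
      by (rule card_inj_on_le) (use assms in auto)
    then show False by simp
  qed
  then obtain i j where "i < j" and ij: "b ^ j mod q = b ^ i mod q"
    unfolding inj_on_def by (metis linorder_neqE_nat)
  define t where "t = j - i"
  have period: "b ^ (i + k * t) mod q = b ^ i mod q" for k
  proof (induction k)
    case (Suc k)
    have "i + Suc k * t = k * t + j"
      using \<open>i < j\<close> by (simp add: t_def)
    then have "b ^ (i + Suc k * t) = b ^ (k * t) * b ^ j"
      by (simp only: power_add)
    then have "b ^ (i + Suc k * t) mod q = b ^ (k * t) * b ^ i mod q"
      by (metis ij mod_mult_right_eq)
    then show ?case
      using Suc.IH by (simp add: ac_simps flip: power_add)
  qed simp
  define e where "e = (i + 1) * t"
  have "(i + 1) * 1 \<le> e"
    unfolding e_def using \<open>i < j\<close> by (intro mult_le_mono2) (simp add: t_def)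
  then have "i < e"
    by simp
  have "e + e = (e - i) + (i + (i + 1) * t)"
    using \<open>i < e\<close> by (simp add: e_def)
  then have "b ^ e * b ^ e = b ^ (e - i) * b ^ (i + (i + 1) * t)"
    by (metis power_add)
  then have "(b ^ e * b ^ e) mod q = b ^ (e - i) * b ^ i mod q"
    by (metis period mod_mult_right_eq)
  also have "\<dots> = b ^ e mod q"
    using \<open>i < e\<close> by (simp flip: power_add)
  finally show ?thesis
    using \<open>i < e\<close> by (intro exI[of _ e]) simp
qed

lemma digit_enumeration:
  fixes D :: "nat set"
  assumes "finite D" "0 \<in> D"
  obtains d where "d ` {..<card D} = D" "strict_mono_on {..<card D} d" "d 0 = 0"
proof -
  obtain d where bij: "bij_betw d {..<card D} D" and mono: "strict_mono_on {..<card D} d"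
    using ex_bij_betw_strict_mono_card[OF assms(1)] by blast
  then have image: "d ` {..<card D} = D"
    by (simp add: bij_betw_def)
  then obtain i where "i < card D" "d i = 0"
    using assms(2) by (metis imageE lessThan_iff)
  moreover have "\<not> 0 < i"
  proof
    assume "0 < i"
    then have "d 0 < d i"
      using mono \<open>i < card D\<close> by (simp add: strict_mono_onD)
    then show False
      using \<open>d i = 0\<close> by simp
  qed
  ultimately have "d 0 = 0"
    by simp
  then show ?thesis
    using that image mono by blast
qed

lemma block_additive_recode_digits:
  assumes "m \<ge> 2" "d 0 = 0" "q > 0" "e \<ge> 1" "b ^ e * b ^ e mod q = b ^ e mod q"
  shows "block_additive (m ^ e) (b ^ e) q (recode_digits m d b)"
proof
  show "2 \<le> m ^ e"
    using assms(1,4) power_increasing[of 1 e m] by simp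
  fix x y K
  assume "x < (m ^ e) ^ K"
  then show "recode_digits m d b (y * (m ^ e) ^ K + x)
      = (b ^ e) ^ K * recode_digits m d b y + recode_digits m d b x"
    using recode_digits_concat[where x = x and L = "e * K"] assms(1,2) by (simp add: power_mult)
qed (use assms in simp_all)

lemma card_dvd_kseq:
  assumes "strict_mono \<phi>" "range \<phi> = digitset b D"
  shows "card {n \<in> {1..N}. q dvd kseq b D n} = card ({n. q dvd \<phi> n} \<inter> {..<N})"
proof -
  have "kseq b D n = \<phi> (n - 1)" for n
    unfolding kseq_def assms(2)[symmetric] by (rule enumerate_range_strict_mono[OF assms(1)])
  then have "{n \<in> {1..N}. q dvd kseq b D n} = Suc ` ({n. q dvd \<phi> n} \<inter> {..<N})"
    by (auto simp: image_iff Suc_le_eq gr0_conv_Suc)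
  then show ?thesis
    by (simp add: card_image)
qed

theorem mainTheorem10:
  fixes b q :: nat and D :: "nat set"
  assumes "b \<ge> 3"
    and "D \<subseteq> {0..<b}"
    and "0 \<in> D"
    and "2 \<le> card D"
    and "card D < b"
    and "q \<ge> 1"
  shows "\<exists>L::real. L > 0 \<and>
    (\<lambda>N. real (card {n \<in> {1..N}. q dvd kseq b D n}) / real N) \<longlonglongrightarrow> L"
proof -
  have "finite D"
    using assms(2) finite_subset by blast
  then obtain d where d: "d ` {..<card D} = D" "strict_mono_on {..<card D} d" "d 0 = 0"
    using digit_enumeration assms(3) by blast
  let ?\<phi> = "recode_digits (card D) d b"
  have "strict_mono ?\<phi>"
    using strict_mono_recode_digits[where b = b, OF assms(4) d(3,2)] d(1) assms(2)
    by (simp add: atLeast0LessThan)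
  moreover have "range ?\<phi> = digitset b D"
    by (rule range_recode_digits[OF assms(4) d(3,1)])
  ultimately have count:
      "card {n \<in> {1..N}. q dvd kseq b D n} = card ({n. q dvd ?\<phi> n} \<inter> {..<N})" for N
    by (rule card_dvd_kseq)
  obtain e where "e \<ge> 1" "b ^ e * b ^ e mod q = b ^ e mod q"
    using ex_power_mod_idempotent[of q b] assms(6) by auto
  then interpret block_additive "card D ^ e" "b ^ e" q ?\<phi>
    using block_additive_recode_digits assms(4,6) d(3) by simp
  show ?thesis
    unfolding count using tendsto_density_zeros limit_freq_pos by blast
qed

end
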